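(* Let $n\ge1$, $0\le\epsilon<\tfrac12$, $t\ge 1$ an integer, and let $f:\{0,1\}^n\to\{0,1\}$ be $\epsilon$-far from the set $A_n$ of $n$-variable affine functions. Let $a^{(0)},a^{(1)},\dots,a^{(t)}$ be independent random elements of $\{0,1\}^n$, each distributed according to $\Pr[a^{(i)}=z]=NW_f(z)^2$ (the outcome distribution of measuring $\mathcal{D}_f|0\rangle^{\otimes n}$ in the computational basis). Then $$\Pr\big[a^{(i)}=a^{(0)}\text{ for all }i=1,\dots,t\big]\le(1-2\epsilon)^t.$$ Consequently, the procedure that reports "$f$ is not affine" iff some $a^{(i)}\ne a^{(0)}$ errs on such $f$ with probability at most $(1-2\epsilon)^t$, and always answers correctly when $f$ is affine.
   Context: For $x,a\in\{0,1\}^n$, $a\cdot x=a_1x_1\oplus\cdots\oplus a_nx_n$. The set $A_n$ of affine functions consists of all functions $x\mapsto a_0\oplus a\cdot x$ with $a_0\in\{0,1\}$, $a\in\{0,1\}^n$. The normalized Walsh transform is $NW_f(\omega)=2^{-n}\sum_{x}(-1)^{f(x)\oplus\omega\cdot x}$, and $\sum_\omega NW_f(\omega)^2=1$. With $U_f|x\rangle=(-1)^{f(x)}|x\rangle$ and $H$ the Hadamard gate, $\mathcal{D}_f=H^{\otimes n}U_fH^{\otimes n}$ satisfies $\mathcal{D}_f|0\rangle^{\otimes n}=\sum_z NW_f(z)|z\rangle$. $f$ is $\epsilon$-far from $A_n$ if $|\{x:f(x)\ne g(x)\}|\ge\epsilon2^n$ for every $g\in A_n$. *)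

theory Defs
  imports "HOL-Probability.Probability"
begin

text \<open>Bit strings in {0,1}^n are represented as boolean lists of length n (True = 1).\<close>

definition cube :: "nat \<Rightarrow> bool list set" where
  "cube n = {x. length x = n}"

definition dotp :: "bool list \<Rightarrow> bool list \<Rightarrow> bool" where
  "dotp a x = foldr (\<lambda>(ai, xi) acc. (ai \<and> xi) \<noteq> acc) (zip a x) False"

definition affine_fns :: "nat \<Rightarrow> (bool list \<Rightarrow> bool) set" where
  "affine_fns n = {(\<lambda>x. a0 \<noteq> dotp a x) | a0 a. a \<in> cube n}"

definition sgn_bool :: "bool \<Rightarrow> real" where
  "sgn_bool b = (if b then -1 else 1)"

definition NW :: "nat \<Rightarrow> (bool list \<Rightarrow> bool) \<Rightarrow> bool list \<Rightarrow> real" where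
  "NW n f w = (\<Sum>x\<in>cube n. sgn_bool (f x \<noteq> dotp w x)) / 2 ^ n"

definition eps_far :: "nat \<Rightarrow> real \<Rightarrow> (bool list \<Rightarrow> bool) \<Rightarrow> bool" where
  "eps_far n eps f \<longleftrightarrow>
     (\<forall>g\<in>affine_fns n. real (card {x\<in>cube n. f x \<noteq> g x}) \<ge> eps * 2 ^ n)"

text \<open>Measurement distribution of D_f|0...0>: Pr[z] = NW_f(z)^2 (a valid pmf by Parseval).\<close>
definition meas_pmf :: "nat \<Rightarrow> (bool list \<Rightarrow> bool) \<Rightarrow> bool list pmf" where
  "meas_pmf n f = embed_pmf (\<lambda>z. if z \<in> cube n then (NW n f z)\<^sup>2 else 0)"

definition all_equal_prob :: "nat \<Rightarrow> (bool list \<Rightarrow> bool) \<Rightarrow> nat \<Rightarrow> real" where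
  "all_equal_prob n f t =
     measure_pmf.prob (Pi_pmf {0..t} [] (\<lambda>_. meas_pmf n f))
       {a. \<forall>i\<in>{1..t}. a i = a 0}"

end

theory Submission
  imports Defs
begin

text \<open>
  Every outcome z of the measurement has probability NW_f(z)^2. Since
  NW_f(z) = 1 - 2 d(f, z\<cdot>x) / 2^n, where d is Hamming distance, and f is
  \<epsilon>-far from both z\<cdot>x and its complement, we get |NW_f(z)| \<le> 1 - 2\<epsilon>; hence
  NW_f(z)^2 \<le> 1 - 2\<epsilon>. Conditioning on a^(0), the t remaining independent
  samples all hit that outcome with probability at most (1 - 2\<epsilon>)^t.
  If f is affine, orthogonality of the characters x \<mapsto> (-1)^(z\<cdot>x) makes the
  distribution a point mass, so the samples always coincide.
\<close>

lemma dotp_Nil [simp]: "dotp [] x = False" "dotp a [] = False"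
  by (simp_all add: dotp_def)

lemma dotp_Cons [simp]: "dotp (a # as) (x # xs) = ((a \<and> x) \<noteq> dotp as xs)"
  by (simp add: dotp_def)

lemma dotp_commute: "dotp a x = dotp x a"
  by (induction a arbitrary: x; case_tac x) auto

lemma sgn_bool_xor [simp]: "sgn_bool (p = (\<not> q)) = sgn_bool p * sgn_bool q"
  by (simp add: sgn_bool_def)

lemma sgn_bool_square [simp]: "sgn_bool p * sgn_bool p = 1"
  by (simp add: sgn_bool_def)

lemma sum_sgn_bool:
  "finite A \<Longrightarrow> (\<Sum>x\<in>A. sgn_bool (P x)) = real (card A) - 2 * real (card {x\<in>A. P x})"
proof -
  assume "finite A"
  then have "(\<Sum>x\<in>A. sgn_bool (P x)) = (\<Sum>x\<in>A. 1 - 2 * of_bool (P x))"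
    by (intro sum.cong refl) (simp add: sgn_bool_def)
  also have "\<dots> = real (card A) - 2 * real (card (A \<inter> {x. P x}))"
    using \<open>finite A\<close> by (simp add: sum_subtractf sum_distrib_left[symmetric])
  finally show ?thesis by (simp add: Int_def conj_commute)
qed

lemma finite_cube [simp]: "finite (cube n)"
  using finite_lists_length_eq[of "UNIV :: bool set" n] by (simp add: cube_def)

lemma card_cube: "card (cube n) = 2 ^ n"
  using card_lists_length_eq[of "UNIV :: bool set" n] by (simp add: cube_def)

lemma sum_cube_Suc:
  "(\<Sum>x\<in>cube (Suc n). F x) = (\<Sum>x\<in>cube n. F (True # x) + F (False # x))"
proof -
  have cube_Suc: "cube (Suc n) = (\<lambda>(h, x). h # x) ` (UNIV \<times> cube n)"
    by (auto simp: cube_def length_Suc_conv image_iff)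
  have inj: "inj_on (\<lambda>(h, x). h # x) (UNIV \<times> cube n)"
    by (auto simp: inj_on_def)
  have "(\<Sum>x\<in>cube (Suc n). F x) = (\<Sum>h\<in>UNIV. \<Sum>x\<in>cube n. F (h # x))"
    unfolding cube_Suc sum.reindex[OF inj] sum.cartesian_product by (simp add: case_prod_beta)
  then show ?thesis
    by (simp add: UNIV_bool sum.distrib add.commute)
qed

lemma sum_characters_orthogonal:
  assumes "a \<in> cube n" and "b \<in> cube n"
  shows "(\<Sum>x\<in>cube n. sgn_bool (dotp a x) * sgn_bool (dotp b x)) = (if a = b then 2 ^ n else 0)"
  using assms
proof (induction n arbitrary: a b)
  case 0
  then show ?case by (simp add: cube_def sgn_bool_def)
next
  case (Suc n)
  then obtain a1 as b1 bs where a: "a = a1 # as" "as \<in> cube n" and b: "b = b1 # bs" "bs \<in> cube n"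
    by (auto simp: cube_def length_Suc_conv)
  have "(\<Sum>x\<in>cube (Suc n). sgn_bool (dotp a x) * sgn_bool (dotp b x))
      = (1 + sgn_bool a1 * sgn_bool b1) * (\<Sum>x\<in>cube n. sgn_bool (dotp as x) * sgn_bool (dotp bs x))"
    unfolding sum_cube_Suc a b by (simp add: sgn_bool_xor sum_distrib_left algebra_simps sum.distrib)
  also have "\<dots> = (if a = b then 2 ^ Suc n else 0)"
    using Suc.IH[OF a(2) b(2)] a b by (auto simp: sgn_bool_def)
  finally show ?case .
qed

lemma NW_eq_correlation:
  "NW n f w = (\<Sum>x\<in>cube n. sgn_bool (f x) * sgn_bool (dotp w x)) / 2 ^ n"
  by (simp add: NW_def sgn_bool_xor)

lemma sum_NW_squared: "(\<Sum>w\<in>cube n. (NW n f w)\<^sup>2) = 1"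
proof -
  define F where "F x = sgn_bool (f x)" for x
  define chr where "chr w x = sgn_bool (dotp w x)" for w x
  have chr_orthogonal: "(\<Sum>w\<in>cube n. chr w x * chr w y) = (if x = y then 2 ^ n else 0)"
    if "x \<in> cube n" "y \<in> cube n" for x y
    using sum_characters_orthogonal[OF that] unfolding chr_def by (simp add: dotp_commute)
  have "(\<Sum>w\<in>cube n. (\<Sum>x\<in>cube n. F x * chr w x)\<^sup>2)
      = (\<Sum>w\<in>cube n. \<Sum>x\<in>cube n. \<Sum>y\<in>cube n. F x * F y * (chr w x * chr w y))"
    by (simp add: power2_eq_square sum_product algebra_simps)
  also have "\<dots> = (\<Sum>x\<in>cube n. \<Sum>y\<in>cube n. \<Sum>w\<in>cube n. F x * F y * (chr w x * chr w y))"
    by (subst sum.swap) (rule sum.cong[OF refl], rule sum.swap)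
  also have "\<dots> = (\<Sum>x\<in>cube n. \<Sum>y\<in>cube n. F x * F y * (if x = y then 2 ^ n else 0))"
    by (intro sum.cong refl) (simp add: sum_distrib_left[symmetric] chr_orthogonal)
  also have "\<dots> = 2 ^ n * 2 ^ n"
    by (simp add: F_def if_distrib sum.delta card_cube cong: if_cong)
  finally show ?thesis
    by (simp add: NW_eq_correlation F_def chr_def power_divide
        sum_divide_distrib[symmetric] power2_eq_square)
qed

lemma pmf_meas_pmf: "pmf (meas_pmf n f) z = (if z \<in> cube n then (NW n f z)\<^sup>2 else 0)"
  unfolding meas_pmf_def
proof (rule pmf_embed_pmf)
  show "(\<integral>\<^sup>+x. ennreal (if x \<in> cube n then (NW n f x)\<^sup>2 else 0) \<partial>count_space UNIV) = 1"
    by (subst nn_integral_count_space'[of "cube n"])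
       (auto simp: sum_ennreal[symmetric] sum_NW_squared intro!: sum.cong)
qed simp

lemma abs_NW_le_if_eps_far:
  assumes far: "eps_far n eps f" and z: "z \<in> cube n"
  shows "\<bar>NW n f z\<bar> \<le> 1 - 2 * eps"
proof -
  define D where "D = {x\<in>cube n. f x \<noteq> dotp z x}"
  have affine: "(\<lambda>x. b \<noteq> dotp z x) \<in> affine_fns n" for b
    using z unfolding affine_fns_def by blast
  have far_from: "eps * 2 ^ n \<le> real (card {x\<in>cube n. f x \<noteq> (b \<noteq> dotp z x)})" for b
    using far affine[of b] unfolding eps_far_def by fastforce
  have "{x\<in>cube n. f x \<noteq> (True \<noteq> dotp z x)} = cube n - D"
    unfolding D_def by auto
  moreover have "card D \<le> 2 ^ n"
    using card_mono[of "cube n" D] by (simp add: D_def card_cube)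
  ultimately have "eps * 2 ^ n \<le> 2 ^ n - real (card D)"
    using far_from[of True] by (simp add: card_Diff_subset D_def card_cube of_nat_diff)
  then have "eps \<le> 1 - real (card D) / 2 ^ n"
    by (simp add: field_simps)
  moreover have "eps \<le> real (card D) / 2 ^ n"
    using far_from[of False] by (simp add: D_def field_simps)
  moreover have "NW n f z = 1 - 2 * (real (card D) / 2 ^ n)"
    unfolding NW_def D_def by (subst sum_sgn_bool) (simp_all add: card_cube diff_divide_distrib)
  ultimately show ?thesis
    by linarith
qed

lemma pmf_meas_pmf_le_if_eps_far:
  assumes "eps_far n eps f" and "eps < 1/2"
  shows "pmf (meas_pmf n f) z \<le> 1 - 2 * eps"
proof (cases "z \<in> cube n")
  case True
  have "(NW n f z)\<^sup>2 \<le> 1"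
    using pmf_le_1[of "meas_pmf n f" z] True by (simp add: pmf_meas_pmf)
  then have "\<bar>NW n f z\<bar> * \<bar>NW n f z\<bar> \<le> \<bar>NW n f z\<bar> * 1"
    by (intro mult_left_mono) (simp_all add: abs_square_le_1)
  then show ?thesis
    using True abs_NW_le_if_eps_far[OF assms(1) True] by (simp add: pmf_meas_pmf power2_eq_square)
qed (use assms in \<open>simp add: pmf_meas_pmf\<close>)

lemma meas_pmf_affine:
  assumes a: "a \<in> cube n"
  shows "meas_pmf n (\<lambda>x. a0 \<noteq> dotp a x) = return_pmf a"
proof (rule pmf_eqI)
  fix z
  show "pmf (meas_pmf n (\<lambda>x. a0 \<noteq> dotp a x)) z = pmf (return_pmf a) z"
  proof (cases "z \<in> cube n")
    case True
    have "NW n (\<lambda>x. a0 \<noteq> dotp a x) z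
        = sgn_bool a0 * (\<Sum>x\<in>cube n. sgn_bool (dotp a x) * sgn_bool (dotp z x)) / 2 ^ n"
      unfolding NW_eq_correlation by (simp add: sum_distrib_left mult.assoc)
    also have "\<dots> = sgn_bool a0 * (if a = z then 1 else 0)"
      using sum_characters_orthogonal[OF a True] by simp
    finally show ?thesis
      using True by (simp add: pmf_meas_pmf power2_eq_square sgn_bool_def indicator_def)
  next
    case False
    then show ?thesis
      using a by (auto simp: pmf_meas_pmf indicator_def)
  qed
qed

lemma prob_Pi_pmf_all_equal_le:
  fixes M :: "'a pmf"
  assumes "finite I" and "i0 \<notin> I" and pmf_le: "\<And>z. pmf M z \<le> c"
  shows "measure_pmf.prob (Pi_pmf (insert i0 I) dflt (\<lambda>_. M)) {a. \<forall>i\<in>I. a i = a i0} \<le> c ^ card I"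
proof -
  let ?P = "Pi_pmf I dflt (\<lambda>_. M)"
  let ?X = "{(y, g). \<forall>i\<in>I. g i = y}"
  have "0 \<le> c"
    using pmf_nonneg[of M undefined] pmf_le[of undefined] by linarith
  have all_equal_y: "emeasure ?P {g. \<forall>i\<in>I. g i = y} \<le> ennreal (c ^ card I)" for y
  proof -
    have "{g. \<forall>i\<in>I. g i = y} = Pi I (\<lambda>_. {y})"
      by (auto simp: Pi_def)
    then have "measure ?P {g. \<forall>i\<in>I. g i = y} = pmf M y ^ card I"
      using \<open>finite I\<close> by (simp add: measure_Pi_pmf_Pi measure_pmf_single)
    also have "\<dots> \<le> c ^ card I"
      using pmf_le by (intro power_mono) auto
    finally show ?thesis
      by (simp add: measure_pmf.emeasure_eq_measure ennreal_leI)
  qed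
  have "emeasure (pair_pmf M ?P) ?X = (\<integral>\<^sup>+y. emeasure ?P {g. \<forall>i\<in>I. g i = y} \<partial>M)"
    unfolding pair_pmf_def by (simp add: indicator_def flip: nn_integral_indicator)
  also have "\<dots> \<le> (\<integral>\<^sup>+y. ennreal (c ^ card I) \<partial>M)"
    by (intro nn_integral_mono all_equal_y)
  finally have bound: "measure (pair_pmf M ?P) ?X \<le> c ^ card I"
    using \<open>0 \<le> c\<close> by (simp add: measure_pmf.emeasure_eq_measure)
  have preimage: "(\<lambda>(y, g). g(i0 := y)) -` {a. \<forall>i\<in>I. a i = a i0} = ?X"
    using \<open>i0 \<notin> I\<close> by (auto split: if_splits)
  show ?thesis
    unfolding Pi_pmf_insert[OF \<open>finite I\<close> \<open>i0 \<notin> I\<close>] measure_map_pmf preimage by (rule bound)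
qed

theorem mainTheorem4:
  fixes n t :: nat and eps :: real and f :: "bool list \<Rightarrow> bool"
  assumes "n \<ge> 1" and "0 \<le> eps" and "eps < 1/2" and "t \<ge> 1"
    and "eps_far n eps f"
  shows "all_equal_prob n f t \<le> (1 - 2 * eps) ^ t \<and>
         (\<forall>g\<in>affine_fns n. all_equal_prob n g t = 1)"
proof
  have "{0..t} = insert 0 {1..t}"
    by auto
  then show "all_equal_prob n f t \<le> (1 - 2 * eps) ^ t"
    using prob_Pi_pmf_all_equal_le[of "{1..t}" 0 "meas_pmf n f" "1 - 2 * eps" "[]"]
          pmf_meas_pmf_le_if_eps_far[OF assms(5,3)]
    by (simp add: all_equal_prob_def)
next
  show "\<forall>g\<in>affine_fns n. all_equal_prob n g t = 1"
  proof
    fix g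
    assume "g \<in> affine_fns n"
    then obtain a0 a where g: "g = (\<lambda>x. a0 \<noteq> dotp a x)" and a: "a \<in> cube n"
      unfolding affine_fns_def by blast
    show "all_equal_prob n g t = 1"
      unfolding all_equal_prob_def g meas_pmf_affine[OF a] by (simp add: measure_return)
  qed
qed

end
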